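(* Let $\tilde{\mathcal S}(\mathbb C^n)$ be the space of endomorphisms of $\mathcal P(\mathbb C^n)$ spanned by the $\tilde\rho_{\alpha\beta}$, $\alpha,\beta\in\mathbb N^n$. The elements of $\tilde{\mathcal S}(\mathbb C^n)$ preserve the subspace $\mathcal D(\mathbb C^n)=\mathbb C[\bar z_1,\dots,\bar z_n]$ of $\mathcal P(\mathbb C^n)$. Furthermore the restriction map $\mathrm{res}:\tilde{\mathcal S}(\mathbb C^n)\to\mathrm{End}(\mathcal D(\mathbb C^n))$ is injective, with image $\mathcal S(\mathbb C^n)$, and $\mathrm{res}(\tilde\rho_{\alpha\beta})=\rho_{\alpha\beta}$.
   Context: $\mathcal P(\mathbb C^n)$ is the space of polynomial maps $\mathbb C^n\to\mathbb C$ with inner product $\langle f,g\rangle=(2\pi)^{-n}\int e^{-|z|^2}f\bar g\,d\mu_n$ ($\mu_n=\prod|dz_id\bar z_i|$). $a_i=\partial_{\bar z_i}$, $a_i^*=\bar z_i-\partial_{z_i}$; $\tilde\rho_{00}$ is the orthogonal projector onto $\mathbb C[z_1,\dots,z_n]$, and $\tilde\rho_{\alpha\beta}=(\alpha!\beta!)^{-1/2}(a^* )^\alpha\tilde\rho_{00}a^\beta$ (multi-index notation). $\mathcal S(\mathbb C^n)$ is the space of endomorphisms $s$ of $\mathcal D(\mathbb C^n)$ with $s(\bar z^\alpha)=0$ for all but finitely many $\alpha$; $\rho_{\alpha\beta}\in\mathcal S(\mathbb C^n)$ is defined by $\rho_{\alpha\beta}((\beta!)^{-1/2}\bar z^\beta)=(\alpha!)^{-1/2}\bar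 z^\alpha$ and $\rho_{\alpha\beta}(\bar z^\gamma)=0$ for $\gamma\ne\beta$. *)

theory Defs
  imports "HOL-Analysis.Analysis" "HOL-Library.FuncSet"
begin

text \<open>Polynomials in z_1..z_n and their conjugates, represented by their coefficient
  functions on exponent pairs (alpha, beta) (monomial z^alpha zbar^beta), with finite support.
  The dimension n is the cardinality of the finite index type 'n.\<close>

type_synonym 'n mexp = "('n \<Rightarrow> nat) \<times> ('n \<Rightarrow> nat)"
type_synonym 'n pol = "'n mexp \<Rightarrow> complex"

definition Pspace :: "('n::finite) pol set" where
  "Pspace = {f. finite {m. f m \<noteq> 0}}"

definition Hol :: "('n::finite) pol set" where
  "Hol = {f \<in> Pspace. \<forall>m. f m \<noteq> 0 \<longrightarrow> snd m = (\<lambda>i. 0)}"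

definition Dsp :: "('n::finite) pol set" where
  "Dsp = {f \<in> Pspace. \<forall>m. f m \<noteq> 0 \<longrightarrow> fst m = (\<lambda>i. 0)}"

definition peval :: "('n::finite) pol \<Rightarrow> complex ^ 'n \<Rightarrow> complex" where
  "peval f z = (\<Sum>m\<in>{m. f m \<noteq> 0}. f m *
      (\<Prod>i\<in>UNIV. (z $ i) ^ (fst m i) * (cnj (z $ i)) ^ (snd m i)))"

text \<open>Inner product (2 pi)^(-n) int e^(-|z|^2) f conj(g) d mu_n, where
  mu_n = prod |dz_i dzbar_i| = 2^n times Lebesgue measure on C^n = R^(2n).\<close>
definition pinner :: "('n::finite) pol \<Rightarrow> 'n pol \<Rightarrow> complex" where
  "pinner f g = complex_of_real ((2::real) ^ CARD('n) / (2 * pi) ^ CARD('n)) *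
     integral\<^sup>L lborel (\<lambda>z::complex ^ 'n.
        complex_of_real (exp (- (norm z)\<^sup>2)) * peval f z * cnj (peval g z))"

definition rho00t :: "('n::finite) pol \<Rightarrow> 'n pol" where
  "rho00t f = (THE h. h \<in> Hol \<and> (\<forall>g\<in>Hol. pinner (\<lambda>m. f m - h m) g = 0))"

definition dbar :: "'n \<Rightarrow> ('n::finite) pol \<Rightarrow> 'n pol" where
  "dbar i f = (\<lambda>(\<alpha>, \<beta>). of_nat (\<beta> i + 1) * f (\<alpha>, \<beta>(i := \<beta> i + 1)))"

definition dz :: "'n \<Rightarrow> ('n::finite) pol \<Rightarrow> 'n pol" where
  "dz i f = (\<lambda>(\<alpha>, \<beta>). of_nat (\<alpha> i + 1) * f (\<alpha>(i := \<alpha> i + 1), \<beta>))"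

definition mulzbar :: "'n \<Rightarrow> ('n::finite) pol \<Rightarrow> 'n pol" where
  "mulzbar i f = (\<lambda>(\<alpha>, \<beta>). if \<beta> i = 0 then 0 else f (\<alpha>, \<beta>(i := \<beta> i - 1)))"

definition astar :: "'n \<Rightarrow> ('n::finite) pol \<Rightarrow> 'n pol" where
  "astar i f = (\<lambda>m. mulzbar i f m - dz i f m)"

text \<open>Multi-index power A^alpha = prod_i (A_i)^(alpha_i) (the A_i commute here).\<close>
definition opow :: "('n \<Rightarrow> ('n::finite) pol \<Rightarrow> 'n pol) \<Rightarrow> ('n \<Rightarrow> nat) \<Rightarrow> 'n pol \<Rightarrow> 'n pol" where
  "opow A \<alpha> = foldr (\<lambda>i g. (A i ^^ \<alpha> i) \<circ> g) (SOME xs. distinct xs \<and> set xs = UNIV) id"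

definition mfact :: "('n::finite \<Rightarrow> nat) \<Rightarrow> real" where
  "mfact \<alpha> = (\<Prod>i\<in>UNIV. fact (\<alpha> i))"

definition rhot :: "('n::finite \<Rightarrow> nat) \<Rightarrow> ('n \<Rightarrow> nat) \<Rightarrow> 'n pol \<Rightarrow> 'n pol" where
  "rhot \<alpha> \<beta> f = (\<lambda>m. complex_of_real (1 / sqrt (mfact \<alpha> * mfact \<beta>)) *
      opow astar \<alpha> (rho00t (opow dbar \<beta> f)) m)"

text \<open>Endomorphisms of P(C^n) are represented as functions restricted to Pspace.
  Stilde = linear span of the rhot alpha beta.\<close>
definition Stilde :: "(('n::finite) pol \<Rightarrow> 'n pol) set" where
  "Stilde = {restrict (\<lambda>f m. \<Sum>p\<in>F. c p * rhot (fst p) (snd p) f m) Pspace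
              | F c. finite F}"

definition res :: "(('n::finite) pol \<Rightarrow> 'n pol) \<Rightarrow> ('n pol \<Rightarrow> 'n pol)" where
  "res T = restrict T Dsp"

definition zbar :: "('n::finite \<Rightarrow> nat) \<Rightarrow> 'n pol" where
  "zbar \<alpha> = (\<lambda>m. if m = ((\<lambda>i. 0), \<alpha>) then 1 else 0)"

definition Send :: "(('n::finite) pol \<Rightarrow> 'n pol) set" where
  "Send = {s. s \<in> extensional Dsp \<and> (\<forall>f\<in>Dsp. s f \<in> Dsp) \<and>
      (\<forall>f\<in>Dsp. \<forall>g\<in>Dsp. s (\<lambda>m. f m + g m) = (\<lambda>m. s f m + s g m)) \<and>
      (\<forall>c. \<forall>f\<in>Dsp. s (\<lambda>m. c * f m) = (\<lambda>m. c * s f m)) \<and>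
      finite {\<alpha>. s (zbar \<alpha>) \<noteq> (\<lambda>m. 0)}}"

text \<open>rho_{alpha beta}: the linear map on D with rho(beta!^(-1/2) zbar^beta) = alpha!^(-1/2) zbar^alpha
  and rho(zbar^gamma) = 0 for gamma /= beta.\<close>
definition rho :: "('n::finite \<Rightarrow> nat) \<Rightarrow> ('n \<Rightarrow> nat) \<Rightarrow> 'n pol \<Rightarrow> 'n pol" where
  "rho \<alpha> \<beta> = restrict (\<lambda>f m. f ((\<lambda>i. 0), \<beta>) *
      complex_of_real (sqrt (mfact \<beta>) / sqrt (mfact \<alpha>)) * zbar \<alpha> m) Dsp"

end

theory Submission
  imports Defs "HOL-Probability.Distributions"
begin

text \<open>
  On D = C[zbar] the orthogonal projection rho00t onto C[z] keeps only the constant term, because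
  the Gaussian moments M(a, c) = int exp(-|z|^2) z^a zbar^c vanish unless a = c. Integration by
  parts in the real coordinates gives the Wirtinger identity
  int exp(-|z|^2) z_i F = int exp(-|z|^2) dF/dzbar_i, hence M(a + e_i, c) = c_i M(a, c - e_i),
  a recursion that kills every off-diagonal moment and keeps the diagonal ones nonzero.
  Consequently rhot alpha beta acts on D exactly as rho alpha beta: the constant term of
  a^beta f is beta! times the coefficient of zbar^beta in f, and on polynomials in zbar alone
  (a^*)^alpha is multiplication by zbar^alpha. Since rho alpha beta maps zbar^beta to a nonzero
  multiple of zbar^alpha and kills the other monomials, the coefficients of a finite combination
  of the rho can be read off from its values on the zbar^beta; this gives injectivity of res, and
  the same recipe writes every element of S as such a combination.
\<close>

section \<open>Gaussian integrals of polynomials in real coordinates\<close>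

lemma
  fixes f :: "'a::euclidean_space \<Rightarrow> real \<Rightarrow> complex"
  assumes int: "\<And>b. b \<in> Basis \<Longrightarrow> integrable lborel (f b)"
  shows integrable_prod_Basis: "integrable lborel (\<lambda>x::'a. \<Prod>b\<in>Basis. f b (x \<bullet> b))"
    and integral_prod_Basis:
      "integral\<^sup>L lborel (\<lambda>x::'a. \<Prod>b\<in>Basis. f b (x \<bullet> b)) = (\<Prod>b\<in>Basis. integral\<^sup>L lborel (f b))"
proof -
  interpret product_sigma_finite "\<lambda>_::'a. lborel :: real measure"
    by (simp add: product_sigma_finite_def sigma_finite_lborel)
  let ?S = "\<lambda>g::'a \<Rightarrow> real. \<Sum>b\<in>Basis. g b *\<^sub>R b"
  have S_meas: "?S \<in> measurable (\<Pi>\<^sub>M b\<in>Basis. lborel) borel" by measurable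
  have meas: "(\<lambda>x::'a. \<Prod>b\<in>Basis. f b (x \<bullet> b)) \<in> borel_measurable borel"
    by (rule borel_measurable_prod, rule measurable_compose[where f="\<lambda>x. x \<bullet> _" and N=borel])
       (use int in auto)
  have eq: "g \<in> space (\<Pi>\<^sub>M b\<in>Basis. lborel) \<Longrightarrow>
      (\<Prod>b\<in>Basis. f b (?S g \<bullet> b)) = (\<Prod>b\<in>Basis. f b (g b))" for g
    by (intro prod.cong refl) (simp add: inner_sum_left_Basis)
  have "integrable (\<Pi>\<^sub>M b\<in>Basis. lborel) (\<lambda>g. \<Prod>b\<in>Basis. f b (g b))"
    by (rule product_integrable_prod) (auto intro: int)
  then have "integrable (\<Pi>\<^sub>M b\<in>Basis. lborel) (\<lambda>g. \<Prod>b\<in>Basis. f b (?S g \<bullet> b))"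
    by (rule Bochner_Integration.integrable_cong[THEN iffD2, OF refl eq, rotated])
  then show "integrable lborel (\<lambda>x::'a. \<Prod>b\<in>Basis. f b (x \<bullet> b))"
    by (subst lborel_eq) (rule integrable_distr_eq[OF S_meas meas, THEN iffD2])
  have "integral\<^sup>L lborel (\<lambda>x::'a. \<Prod>b\<in>Basis. f b (x \<bullet> b))
      = integral\<^sup>L (\<Pi>\<^sub>M b\<in>Basis. lborel) (\<lambda>g. \<Prod>b\<in>Basis. f b (?S g \<bullet> b))"
    by (subst lborel_eq) (rule integral_distr[OF S_meas meas])
  also have "\<dots> = integral\<^sup>L (\<Pi>\<^sub>M b\<in>Basis. lborel) (\<lambda>g. \<Prod>b\<in>Basis. f b (g b))"
    by (rule Bochner_Integration.integral_cong[OF refl eq])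
  also have "\<dots> = (\<Prod>b\<in>Basis. integral\<^sup>L lborel (f b))"
    by (rule product_integral_prod) (auto intro: int)
  finally show "integral\<^sup>L lborel (\<lambda>x::'a. \<Prod>b\<in>Basis. f b (x \<bullet> b))
      = (\<Prod>b\<in>Basis. integral\<^sup>L lborel (f b))" .
qed

definition gauss_moment :: "nat \<Rightarrow> real" where
  "gauss_moment m = integral\<^sup>L lborel (\<lambda>t::real. exp (- t\<^sup>2) * t ^ m)"

lemma has_bochner_integral_gauss_moment_even:
  "has_bochner_integral lborel (\<lambda>t::real. exp (- t\<^sup>2) * t ^ (2 * k))
     (sqrt pi * (fact (2 * k) / (2 ^ (2 * k) * fact k)))"
  using has_bochner_integral_even_function[OF gaussian_moment_even_pos[of k]] by simp

lemma has_bochner_integral_gauss_moment_odd: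
  "has_bochner_integral lborel (\<lambda>t::real. exp (- t\<^sup>2) * t ^ (2 * k + 1)) 0"
  by (rule has_bochner_integral_odd_function[OF gaussian_moment_odd_pos]) simp

lemma integrable_gauss_moment: "integrable lborel (\<lambda>t::real. exp (- t\<^sup>2) * t ^ m)"
proof (cases "even m")
  case True
  then obtain k where "m = 2 * k" by (auto elim: evenE)
  then show ?thesis using integrable.intros[OF has_bochner_integral_gauss_moment_even[of k]] by simp
next
  case False
  then obtain k where "m = 2 * k + 1" by (auto elim: oddE)
  then show ?thesis using integrable.intros[OF has_bochner_integral_gauss_moment_odd[of k]] by simp
qed

lemma gauss_moment_even: "gauss_moment (2 * k) = sqrt pi * (fact (2 * k) / (2 ^ (2 * k) * fact k))"
  unfolding gauss_moment_def
  by (rule has_bochner_integral_integral_eq[OF has_bochner_integral_gauss_moment_even])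

lemma gauss_moment_odd: "gauss_moment (2 * k + 1) = 0"
  unfolding gauss_moment_def
  by (rule has_bochner_integral_integral_eq[OF has_bochner_integral_gauss_moment_odd])

lemma gauss_moment_0: "gauss_moment 0 = sqrt pi"
  using gauss_moment_even[of 0] by simp

lemma gauss_moment_rec: "real m * gauss_moment (m - 1) = 2 * gauss_moment (m + 1)"
proof (cases "even m")
  case True
  then obtain k where "m = 2 * k" by (auto elim: evenE)
  then show ?thesis
    using gauss_moment_odd[of k] gauss_moment_odd[of "k - 1"] by (cases k) auto
next
  case False
  then obtain k where k: "m = 2 * k + 1" by (auto elim: oddE)
  define F P K where "F = (fact (2 * k) :: real)" and "P = (2::real) ^ (2 * k)" and "K = (fact k :: real)"
  have "F \<noteq> 0" "P \<noteq> 0" "K \<noteq> 0" "real k + 1 \<noteq> 0" unfolding F_def P_def K_def by auto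
  then have "real (2 * k + 1) * (sqrt pi * (F / (P * K))) =
      2 * (sqrt pi * ((2 * real k + 2) * (2 * real k + 1) * F / (4 * P * ((real k + 1) * K))))"
    by (simp add: divide_simps; algebra)
  moreover have "gauss_moment (2 * k) = sqrt pi * (F / (P * K))"
    unfolding gauss_moment_even F_def P_def K_def ..
  moreover have "gauss_moment (2 * (k + 1)) =
      sqrt pi * ((2 * real k + 2) * (2 * real k + 1) * F / (4 * P * ((real k + 1) * K)))"
    unfolding gauss_moment_even F_def P_def K_def by (simp add: algebra_simps power_add)
  ultimately show ?thesis by (simp add: k)
qed

definition gaussian_integral :: "('a::euclidean_space \<Rightarrow> complex) \<Rightarrow> complex" where
  "gaussian_integral F = integral\<^sup>L lborel (\<lambda>z. complex_of_real (exp (- (norm z)\<^sup>2)) * F z)"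

definition gaussian_integrable :: "('a::euclidean_space \<Rightarrow> complex) \<Rightarrow> bool" where
  "gaussian_integrable F \<longleftrightarrow> integrable lborel (\<lambda>z. complex_of_real (exp (- (norm z)\<^sup>2)) * F z)"

lemma gaussian_integrable_add:
  "gaussian_integrable F \<Longrightarrow> gaussian_integrable H \<Longrightarrow> gaussian_integrable (\<lambda>z. F z + H z)"
  unfolding gaussian_integrable_def by (simp add: distrib_left)

lemma gaussian_integral_add:
  "gaussian_integrable F \<Longrightarrow> gaussian_integrable H \<Longrightarrow>
    gaussian_integral (\<lambda>z. F z + H z) = gaussian_integral F + gaussian_integral H"
  unfolding gaussian_integral_def gaussian_integrable_def by (simp add: distrib_left)

lemma gaussian_integrable_cmult: "gaussian_integrable F \<Longrightarrow> gaussian_integrable (\<lambda>z. c * F z)"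
  unfolding gaussian_integrable_def by (simp add: mult.left_commute)

lemma gaussian_integral_cmult: "gaussian_integral (\<lambda>z. c * F z) = c * gaussian_integral F"
  unfolding gaussian_integral_def by (simp add: mult.left_commute)

lemma gaussian_integral_sum:
  "(\<And>s. s \<in> S \<Longrightarrow> gaussian_integrable (F s)) \<Longrightarrow>
    gaussian_integral (\<lambda>z. \<Sum>s\<in>S. F s z) = (\<Sum>s\<in>S. gaussian_integral (F s))"
  unfolding gaussian_integral_def gaussian_integrable_def by (simp add: sum_distrib_left)

lemma gaussian_integrable_sum:
  "(\<And>s. s \<in> S \<Longrightarrow> gaussian_integrable (F s)) \<Longrightarrow> gaussian_integrable (\<lambda>z. \<Sum>s\<in>S. F s z)"
  unfolding gaussian_integrable_def by (simp add: sum_distrib_left)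

definition coord_monomial :: "('a::euclidean_space \<Rightarrow> nat) \<Rightarrow> 'a \<Rightarrow> complex" where
  "coord_monomial e z = (\<Prod>b\<in>Basis. complex_of_real (z \<bullet> b) ^ e b)"

lemma coord_monomial_add: "coord_monomial (\<lambda>b. e b + e' b) z = coord_monomial e z * coord_monomial e' z"
  unfolding coord_monomial_def by (simp add: power_add prod.distrib)

lemma coord_monomial_upd:
  assumes "b0 \<in> Basis"
  shows "coord_monomial (e(b0 := k)) z =
    complex_of_real (z \<bullet> b0) ^ k * (\<Prod>b\<in>Basis - {b0}. complex_of_real (z \<bullet> b) ^ e b)"
  unfolding coord_monomial_def using assms
  by (subst prod.remove[OF finite_Basis]) (auto intro!: prod.cong)

lemma coord_monomial_shift:
  assumes b0: "b0 \<in> Basis"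
  shows "coord_monomial e (z + t *\<^sub>R b0) =
    (complex_of_real (z \<bullet> b0) + complex_of_real t) ^ e b0 *
    (\<Prod>b\<in>Basis - {b0}. complex_of_real (z \<bullet> b) ^ e b)"
proof -
  have "coord_monomial e (z + t *\<^sub>R b0) = coord_monomial (e(b0 := e b0)) (z + t *\<^sub>R b0)" by simp
  also have "\<dots> = complex_of_real ((z + t *\<^sub>R b0) \<bullet> b0) ^ e b0 *
      (\<Prod>b\<in>Basis - {b0}. complex_of_real ((z + t *\<^sub>R b0) \<bullet> b) ^ e b)"
    by (rule coord_monomial_upd[OF b0])
  also have "(\<Prod>b\<in>Basis - {b0}. complex_of_real ((z + t *\<^sub>R b0) \<bullet> b) ^ e b) =
      (\<Prod>b\<in>Basis - {b0}. complex_of_real (z \<bullet> b) ^ e b)"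
    using b0 by (intro prod.cong) (auto simp: inner_add_left inner_not_same_Basis)
  finally show ?thesis
    using b0 by (simp add: inner_add_left)
qed

lemma coord_monomial_coord_mult:
  assumes "b0 \<in> Basis"
  shows "complex_of_real (z \<bullet> b0) * coord_monomial e z = coord_monomial (e(b0 := e b0 + 1)) z"
  using coord_monomial_upd[OF assms, of e "e b0"] coord_monomial_upd[OF assms, of e "e b0 + 1"] by simp

lemma
  fixes e :: "'a::euclidean_space \<Rightarrow> nat"
  shows gaussian_integrable_coord_monomial: "gaussian_integrable (coord_monomial e)"
    and gaussian_integral_coord_monomial:
      "gaussian_integral (coord_monomial e) = (\<Prod>b\<in>Basis. complex_of_real (gauss_moment (e b)))"
proof -
  have "(norm z)\<^sup>2 = (\<Sum>b\<in>Basis. (z \<bullet> b)\<^sup>2)" for z :: 'a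
    unfolding power2_norm_eq_inner by (subst euclidean_inner) (simp add: power2_eq_square)
  then have eq: "complex_of_real (exp (- (norm z)\<^sup>2)) * coord_monomial e z =
      (\<Prod>b\<in>Basis. complex_of_real (exp (- (z \<bullet> b)\<^sup>2) * (z \<bullet> b) ^ e b))" for z :: 'a
    by (simp add: coord_monomial_def exp_sum sum_negf[symmetric] prod.distrib)
  have int: "integrable lborel (\<lambda>t. complex_of_real (exp (- t\<^sup>2) * t ^ e b))" for b
    using integrable_gauss_moment by (simp only: complex_of_real_integrable_eq)
  show "gaussian_integrable (coord_monomial e)"
    unfolding gaussian_integrable_def eq by (rule integrable_prod_Basis[OF int])
  show "gaussian_integral (coord_monomial e) = (\<Prod>b\<in>Basis. complex_of_real (gauss_moment (e b)))"
    unfolding gaussian_integral_def eq integral_prod_Basis[OF int]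
    by (simp only: gauss_moment_def integral_complex_of_real)
qed

lemma has_vector_derivative_coord_monomial:
  assumes b0: "b0 \<in> Basis"
  shows "((\<lambda>t. coord_monomial e (z + t *\<^sub>R b0)) has_vector_derivative
    of_nat (e b0) * coord_monomial (e(b0 := e b0 - 1)) z) (at 0)"
proof -
  define R where "R = (\<Prod>b\<in>Basis - {b0}. complex_of_real (z \<bullet> b) ^ e b)"
  define p where "p w = (complex_of_real (z \<bullet> b0) + w) ^ e b0 * R" for w
  have "(p has_field_derivative of_nat (e b0) * (complex_of_real (z \<bullet> b0) + 0) ^ (e b0 - 1) * R) (at 0)"
    unfolding p_def by (auto intro!: derivative_eq_intros)
  then have "((\<lambda>t. p (of_real t)) has_vector_derivative
      of_nat (e b0) * complex_of_real (z \<bullet> b0) ^ (e b0 - 1) * R) (at 0)"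
    using has_vector_derivative_real_field[of p _ 0] by simp
  then show ?thesis
    by (simp add: p_def coord_monomial_shift[OF b0] coord_monomial_upd[OF b0] R_def mult.assoc)
qed

lemma gaussian_integral_coord_monomial_deriv:
  fixes e :: "'a::euclidean_space \<Rightarrow> nat"
  assumes b0: "b0 \<in> Basis"
  shows "of_nat (e b0) * gaussian_integral (coord_monomial (e(b0 := e b0 - 1))) =
    2 * gaussian_integral (\<lambda>z. complex_of_real (z \<bullet> b0) * coord_monomial e z)"
proof -
  define R where "R = (\<Prod>b\<in>Basis - {b0}. complex_of_real (gauss_moment (e b)))"
  have moments: "(\<Prod>b\<in>Basis. complex_of_real (gauss_moment ((e(b0 := k)) b))) =
      complex_of_real (gauss_moment k) * R" for k
    unfolding R_def using b0 by (subst prod.remove[OF finite_Basis b0]) (auto intro!: prod.cong arg_cong2[where f=times])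
  have shift: "(\<lambda>z. complex_of_real (z \<bullet> b0) * coord_monomial e z) = coord_monomial (e(b0 := e b0 + 1))"
    using coord_monomial_coord_mult[OF b0] by blast
  have "of_nat (e b0) * complex_of_real (gauss_moment (e b0 - 1)) =
      2 * complex_of_real (gauss_moment (e b0 + 1))"
    using gauss_moment_rec[of "e b0"] by (metis of_real_mult of_real_of_nat_eq of_real_numeral)
  then show ?thesis
    unfolding shift gaussian_integral_coord_monomial moments by (simp only: mult.assoc[symmetric])
qed

definition coord_poly :: "(complex \<times> ('a::euclidean_space \<Rightarrow> nat)) list \<Rightarrow> 'a \<Rightarrow> complex" where
  "coord_poly ts z = (\<Sum>(d, e)\<leftarrow>ts. d * coord_monomial e z)"

lemma coord_poly_simps [simp]:
  "coord_poly [] z = 0"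
  "coord_poly ((d, e) # ts) z = d * coord_monomial e z + coord_poly ts z"
  by (simp_all add: coord_poly_def)

lemma coord_poly_Cons:
  "coord_poly ((d, e) # ts) = (\<lambda>z. d * coord_monomial e z + coord_poly ts z)"
  by (simp add: fun_eq_iff)

lemma coord_poly_append: "coord_poly (ts @ us) z = coord_poly ts z + coord_poly us z"
  by (simp add: coord_poly_def)

lemma coord_poly_shift:
  "coord_poly (map (\<lambda>(d', e'). (d * d', \<lambda>b. e b + e' b)) ts) z = d * coord_monomial e z * coord_poly ts z"
  by (induction ts) (auto simp: coord_monomial_add algebra_simps)

lemma coord_poly_mult:
  "coord_poly (concat (map (\<lambda>(d, e). map (\<lambda>(d', e'). (d * d', \<lambda>b. e b + e' b)) us) ts)) z =
    coord_poly ts z * coord_poly us z"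
  by (induction ts) (auto simp: coord_poly_append coord_poly_shift algebra_simps)

lemma coord_poly_coord_mult:
  assumes b0: "b0 \<in> Basis"
  shows "complex_of_real (z \<bullet> b0) * coord_poly ts z =
    coord_poly (map (\<lambda>(d, e). (d, e(b0 := e b0 + 1))) ts) z"
proof (induction ts)
  case (Cons t ts)
  obtain d e where t: "t = (d, e)" by (cases t)
  have "complex_of_real (z \<bullet> b0) * coord_poly (t # ts) z =
      d * (complex_of_real (z \<bullet> b0) * coord_monomial e z) + complex_of_real (z \<bullet> b0) * coord_poly ts z"
    by (simp add: t algebra_simps)
  then show ?case by (simp add: t Cons.IH coord_monomial_coord_mult[OF b0] fun_upd_def)
qed simp

lemma gaussian_integrable_coord_poly: "gaussian_integrable (coord_poly ts)"
proof (induction ts)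
  case Nil
  show ?case by (simp add: gaussian_integrable_def)
next
  case (Cons t ts)
  then show ?case
    by (cases t) (simp add: coord_poly_Cons gaussian_integrable_add gaussian_integrable_cmult
        gaussian_integrable_coord_monomial)
qed

definition coord_poly_deriv :: "'a \<Rightarrow> (complex \<times> ('a::euclidean_space \<Rightarrow> nat)) list \<Rightarrow> (complex \<times> ('a \<Rightarrow> nat)) list" where
  "coord_poly_deriv b0 ts = map (\<lambda>(d, e). (of_nat (e b0) * d, e(b0 := e b0 - 1))) ts"

lemma coord_poly_deriv_simps [simp]:
  "coord_poly_deriv b0 [] = []"
  "coord_poly_deriv b0 ((d, e) # ts) = (of_nat (e b0) * d, e(b0 := e b0 - 1)) # coord_poly_deriv b0 ts"
  by (simp_all add: coord_poly_deriv_def)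

lemma has_vector_derivative_coord_poly:
  assumes "b0 \<in> Basis"
  shows "((\<lambda>t. coord_poly ts (z + t *\<^sub>R b0)) has_vector_derivative coord_poly (coord_poly_deriv b0 ts) z) (at 0)"
  by (induction ts)
     (auto simp: coord_poly_deriv_def mult.left_commute
       intro!: derivative_eq_intros has_vector_derivative_coord_monomial[OF assms])

lemma gaussian_integral_coord_poly_deriv:
  assumes b0: "b0 \<in> Basis"
  shows "gaussian_integral (coord_poly (coord_poly_deriv b0 ts)) =
    2 * gaussian_integral (\<lambda>z. complex_of_real (z \<bullet> b0) * coord_poly ts z)"
proof (induction ts)
  case Nil
  then show ?case by (simp add: gaussian_integral_def)
next
  case (Cons t ts)
  obtain d e where t: "t = (d, e)" by (cases t)
  let ?up = "\<lambda>(d, e). (d, e(b0 := e b0 + 1))"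
  note integrable = gaussian_integrable_coord_poly gaussian_integrable_coord_monomial
    gaussian_integrable_cmult
  have "gaussian_integral (coord_poly (coord_poly_deriv b0 (t # ts))) =
      d * (of_nat (e b0) * gaussian_integral (coord_monomial (e(b0 := e b0 - 1)))) +
      gaussian_integral (coord_poly (coord_poly_deriv b0 ts))"
    by (simp add: t coord_poly_Cons gaussian_integral_add integrable gaussian_integral_cmult)
  also have "\<dots> = 2 * (d * gaussian_integral (coord_monomial (e(b0 := e b0 + 1))) +
      gaussian_integral (coord_poly (map ?up ts)))"
    unfolding gaussian_integral_coord_monomial_deriv[OF b0] Cons.IH
    by (simp only: coord_monomial_coord_mult[OF b0] coord_poly_coord_mult[OF b0] distrib_left
        mult.left_commute[of 2])
  also have "\<dots> = 2 * gaussian_integral (coord_poly (map ?up (t # ts)))"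
    by (simp add: t coord_poly_Cons gaussian_integral_add integrable gaussian_integral_cmult)
  also have "\<dots> = 2 * gaussian_integral (\<lambda>z. complex_of_real (z \<bullet> b0) * coord_poly (t # ts) z)"
    by (simp only: coord_poly_coord_mult[OF b0])
  finally show ?case .
qed

definition is_coord_poly :: "('a::euclidean_space \<Rightarrow> complex) \<Rightarrow> bool" where
  "is_coord_poly F \<longleftrightarrow> (\<exists>ts. F = coord_poly ts)"

lemma is_coord_poly_const: "is_coord_poly (\<lambda>z. c)"
  unfolding is_coord_poly_def
  by (rule exI[of _ "[(c, \<lambda>_. 0)]"]) (simp add: fun_eq_iff coord_monomial_def)

lemma is_coord_poly_coord:
  assumes "b \<in> Basis"
  shows "is_coord_poly (\<lambda>z. complex_of_real (z \<bullet> b))"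
  unfolding is_coord_poly_def
  by (rule exI[of _ "[(1, (\<lambda>_. 0)(b := 1))]"])
     (simp add: fun_eq_iff coord_monomial_upd[OF assms] coord_monomial_def[of "\<lambda>_. 0"])

lemma is_coord_poly_add: "is_coord_poly F \<Longrightarrow> is_coord_poly H \<Longrightarrow> is_coord_poly (\<lambda>z. F z + H z)"
  unfolding is_coord_poly_def by (auto simp: coord_poly_append[symmetric])

lemma is_coord_poly_mult: "is_coord_poly F \<Longrightarrow> is_coord_poly H \<Longrightarrow> is_coord_poly (\<lambda>z. F z * H z)"
  unfolding is_coord_poly_def by (auto simp: coord_poly_mult[symmetric])

lemma is_coord_poly_power: "is_coord_poly F \<Longrightarrow> is_coord_poly (\<lambda>z. F z ^ k)"
  by (induction k) (auto intro: is_coord_poly_mult is_coord_poly_const)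

lemma is_coord_poly_prod:
  "finite A \<Longrightarrow> (\<And>j. j \<in> A \<Longrightarrow> is_coord_poly (F j)) \<Longrightarrow> is_coord_poly (\<lambda>z. \<Prod>j\<in>A. F j z)"
  by (induction A rule: finite_induct) (auto intro: is_coord_poly_mult is_coord_poly_const)

theorem gaussian_integration_by_parts:
  assumes "is_coord_poly F" and b0: "b0 \<in> Basis"
    and D: "\<And>z. ((\<lambda>t. F (z + t *\<^sub>R b0)) has_vector_derivative D z) (at 0)"
  shows "gaussian_integrable D"
    and "gaussian_integral D = 2 * gaussian_integral (\<lambda>z. complex_of_real (z \<bullet> b0) * F z)"
proof -
  obtain ts where F: "F = coord_poly ts" using assms(1) unfolding is_coord_poly_def by blast
  have "D z = coord_poly (coord_poly_deriv b0 ts) z" for z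
    using D[of z] unfolding F by (rule vector_derivative_unique_at[OF _ has_vector_derivative_coord_poly[OF b0]])
  then have "D = coord_poly (coord_poly_deriv b0 ts)" ..
  then show "gaussian_integrable D"
    and "gaussian_integral D = 2 * gaussian_integral (\<lambda>z. complex_of_real (z \<bullet> b0) * F z)"
    by (simp_all add: F gaussian_integrable_coord_poly gaussian_integral_coord_poly_deriv[OF b0])
qed

lemma gaussian_integrable_is_coord_poly: "is_coord_poly F \<Longrightarrow> gaussian_integrable F"
  unfolding is_coord_poly_def using gaussian_integrable_coord_poly by blast

section \<open>Gaussian moments of the monomials z^a zbar^c\<close>

lemma axis_in_Basis_complex:
  shows "axis i (1::complex) \<in> (Basis :: (complex ^ 'n::finite) set)"
    and "axis i \<i> \<in> (Basis :: (complex ^ 'n::finite) set)"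
  unfolding Basis_vec_def using complex_Basis_1 complex_Basis_i by blast+

lemma vec_nth_eq_inner_axis:
  "z $ i = complex_of_real (z \<bullet> axis i 1) + \<i> * complex_of_real (z \<bullet> axis i \<i>)"
  by (simp add: inner_axis complex_eq_iff)

definition zmonomial :: "('n::finite \<Rightarrow> nat) \<Rightarrow> ('n \<Rightarrow> nat) \<Rightarrow> complex ^ 'n \<Rightarrow> complex" where
  "zmonomial a c z = (\<Prod>i\<in>UNIV. (z $ i) ^ a i * cnj (z $ i) ^ c i)"

definition zmoment :: "('n::finite \<Rightarrow> nat) \<Rightarrow> ('n \<Rightarrow> nat) \<Rightarrow> complex" where
  "zmoment a c = gaussian_integral (zmonomial a c)"

lemma is_coord_poly_zmonomial: "is_coord_poly (zmonomial a c)"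
proof -
  have coord: "is_coord_poly (\<lambda>z::complex ^ 'n. z $ i)"
    and coord_cnj: "is_coord_poly (\<lambda>z::complex ^ 'n. cnj (z $ i))" for i
    unfolding vec_nth_eq_inner_axis complex_cnj_add complex_cnj_mult complex_cnj_i complex_cnj_complex_of_real
    by (intro is_coord_poly_add is_coord_poly_mult is_coord_poly_const is_coord_poly_coord
        axis_in_Basis_complex)+
  show ?thesis
    unfolding zmonomial_def
    by (intro is_coord_poly_prod is_coord_poly_mult is_coord_poly_power coord coord_cnj) simp
qed

lemma gaussian_integrable_zmonomial: "gaussian_integrable (zmonomial a c)"
  by (rule gaussian_integrable_is_coord_poly[OF is_coord_poly_zmonomial])

lemma zmonomial_upd:
  "zmonomial (a(i := p)) (c(i := q)) z =
    (z $ i) ^ p * cnj (z $ i) ^ q * (\<Prod>j\<in>UNIV - {i}. (z $ j) ^ a j * cnj (z $ j) ^ c j)"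
  unfolding zmonomial_def by (subst prod.remove[of _ i]) (auto intro!: prod.cong)

lemma vec_nth_mult_zmonomial: "z $ i * zmonomial a c z = zmonomial (a(i := a i + 1)) c z"
  using zmonomial_upd[of a i "a i" c "c i" z] zmonomial_upd[of a i "a i + 1" c "c i" z] by simp

lemma cnj_zmonomial: "cnj (zmonomial a c z) = zmonomial c a z"
  unfolding zmonomial_def by (simp add: cnj_prod mult.commute)

lemma zmoment_swap: "zmoment c a = cnj (zmoment a c)"
  unfolding zmoment_def gaussian_integral_def
  by (simp flip: Bochner_Integration.integral_cnj add: cnj_zmonomial)

lemma has_vector_derivative_zmonomial:
  "((\<lambda>t. zmonomial a c (z + t *\<^sub>R axis i u)) has_vector_derivative
     (of_nat (a i) * (z $ i) ^ (a i - 1) * u * cnj (z $ i) ^ c i +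
      (z $ i) ^ a i * of_nat (c i) * cnj (z $ i) ^ (c i - 1) * cnj u) *
     (\<Prod>j\<in>UNIV - {i}. (z $ j) ^ a j * cnj (z $ j) ^ c j)) (at 0)"
proof -
  define R where "R = (\<Prod>j\<in>UNIV - {i}. (z $ j) ^ a j * cnj (z $ j) ^ c j)"
  define p where "p w = (z $ i + w * u) ^ a i * (cnj (z $ i) + w * cnj u) ^ c i * R" for w
  have "(p has_field_derivative
     (of_nat (a i) * (z $ i + 0 * u) ^ (a i - 1) * u * (cnj (z $ i) + 0 * cnj u) ^ c i +
      (z $ i + 0 * u) ^ a i * (of_nat (c i) * (cnj (z $ i) + 0 * cnj u) ^ (c i - 1) * cnj u)) * R) (at 0)"
    unfolding p_def by (rule derivative_eq_intros refl)+ (simp add: algebra_simps)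
  then have "((\<lambda>t. p (of_real t)) has_vector_derivative
     (of_nat (a i) * (z $ i) ^ (a i - 1) * u * cnj (z $ i) ^ c i +
      (z $ i) ^ a i * of_nat (c i) * cnj (z $ i) ^ (c i - 1) * cnj u) * R) (at 0)"
    using has_vector_derivative_real_field[of p _ 0] by (simp add: mult.assoc)
  moreover have "zmonomial a c (z + t *\<^sub>R axis i u) = p (of_real t)" for t
  proof -
    have "zmonomial a c (z + t *\<^sub>R axis i u) =
        zmonomial (a(i := a i)) (c(i := c i)) (z + t *\<^sub>R axis i u)" by simp
    also have "\<dots> = p (of_real t)"
      unfolding zmonomial_upd p_def R_def
      by (intro arg_cong2[where f=times] prod.cong) (auto simp: axis_def simp flip: scaleR_conv_of_real)
    finally show ?thesis .
  qed
  ultimately show ?thesis by (simp add: R_def)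
qed

text \<open>Integration by parts along Re z_i and Im z_i, combined into int z_i F = int dF/dzbar_i.\<close>

lemma zmoment_Suc_left:
  fixes a c :: "'n::finite \<Rightarrow> nat"
  shows "zmoment (a(i := a i + 1)) c = of_nat (c i) * zmoment a (c(i := c i - 1))"
proof -
  let ?x = "\<lambda>z::complex ^ 'n. complex_of_real (z \<bullet> axis i 1)"
  let ?y = "\<lambda>z::complex ^ 'n. complex_of_real (z \<bullet> axis i \<i>)"
  define R where "R z = (\<Prod>j\<in>UNIV - {i}. (z $ j) ^ a j * cnj (z $ j) ^ c j)" for z :: "complex ^ 'n"
  define D where "D u z = (of_nat (a i) * (z $ i) ^ (a i - 1) * u * cnj (z $ i) ^ c i +
      (z $ i) ^ a i * of_nat (c i) * cnj (z $ i) ^ (c i - 1) * cnj u) * R z" for u z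
  have D: "((\<lambda>t. zmonomial a c (z + t *\<^sub>R axis i u)) has_vector_derivative D u z) (at 0)" for u z
    unfolding D_def R_def by (rule has_vector_derivative_zmonomial)
  note ibp_re = gaussian_integration_by_parts[OF is_coord_poly_zmonomial axis_in_Basis_complex(1) D]
  note ibp_im = gaussian_integration_by_parts[OF is_coord_poly_zmonomial axis_in_Basis_complex(2) D]
  have int: "gaussian_integrable (\<lambda>z. ?x z * zmonomial a c z)" "gaussian_integrable (\<lambda>z. ?y z * zmonomial a c z)"
    by (intro gaussian_integrable_is_coord_poly is_coord_poly_mult is_coord_poly_coord
        is_coord_poly_zmonomial axis_in_Basis_complex)+
  have "zmonomial (a(i := a i + 1)) c = (\<lambda>z. ?x z * zmonomial a c z + \<i> * (?y z * zmonomial a c z))"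
  proof
    fix z :: "complex ^ 'n"
    show "zmonomial (a(i := a i + 1)) c z = ?x z * zmonomial a c z + \<i> * (?y z * zmonomial a c z)"
      unfolding vec_nth_mult_zmonomial[symmetric] by (subst vec_nth_eq_inner_axis) (simp add: algebra_simps)
  qed
  then have "2 * zmoment (a(i := a i + 1)) c = gaussian_integral (D 1) + \<i> * gaussian_integral (D \<i>)"
    unfolding zmoment_def using int ibp_re(2) ibp_im(2)
    by (simp add: gaussian_integral_add gaussian_integrable_cmult gaussian_integral_cmult algebra_simps)
  also have "\<dots> = gaussian_integral (\<lambda>z. D 1 z + \<i> * D \<i> z)"
    using ibp_re(1) ibp_im(1) by (simp add: gaussian_integral_add gaussian_integrable_cmult gaussian_integral_cmult)
  also have "(\<lambda>z. D 1 z + \<i> * D \<i> z) = (\<lambda>z. (2 * of_nat (c i)) * zmonomial a (c(i := c i - 1)) z)"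
  proof
    fix z :: "complex ^ 'n"
    have "zmonomial a (c(i := c i - 1)) z = (z $ i) ^ a i * cnj (z $ i) ^ (c i - 1) * R z"
      using zmonomial_upd[of a i "a i" c "c i - 1" z] by (simp add: R_def)
    then show "D 1 z + \<i> * D \<i> z = (2 * of_nat (c i)) * zmonomial a (c(i := c i - 1)) z"
      by (simp add: D_def algebra_simps)
  qed
  finally show ?thesis unfolding zmoment_def gaussian_integral_cmult by simp
qed

lemma zmoment_reduce:
  assumes "0 < a i"
  shows "zmoment a c = of_nat (c i) * zmoment (a(i := a i - 1)) (c(i := c i - 1))"
  using zmoment_Suc_left[of "a(i := a i - 1)" i c] assms by simp

lemma zmoment_zero_zero: "zmoment (\<lambda>_::'n::finite. 0) (\<lambda>_. 0) \<noteq> 0"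
proof -
  have "zmonomial (\<lambda>_. 0) (\<lambda>_. 0) = (coord_monomial (\<lambda>_. 0) :: complex ^ 'n \<Rightarrow> complex)"
    by (simp add: fun_eq_iff zmonomial_def coord_monomial_def)
  then show ?thesis
    by (simp add: zmoment_def gaussian_integral_coord_monomial gauss_moment_0)
qed

lemma zmoment_nonzero_iff: "zmoment a c \<noteq> 0 \<longleftrightarrow> a = c"
proof (induction "sum a UNIV" arbitrary: a c rule: less_induct)
  case less
  show ?case
  proof (cases "a = (\<lambda>_. 0)")
    case a: True
    show ?thesis
    proof (cases "c = (\<lambda>_. 0)")
      case False
      then obtain i where "0 < c i" by auto
      then have "zmoment c a = 0" using zmoment_reduce[of c i a] a by simp
      then show ?thesis using zmoment_swap[of a c] False a by simp
    qed (use a zmoment_zero_zero in simp)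
  next
    case False
    then obtain i where i: "0 < a i" by auto
    define a' c' where "a' = a(i := a i - 1)" and "c' = c(i := c i - 1)"
    have reduce: "zmoment a c = of_nat (c i) * zmoment a' c'"
      unfolding a'_def c'_def by (rule zmoment_reduce[of a i, OF i])
    show ?thesis
    proof (cases "c i = 0")
      case False
      have "sum a' UNIV < sum a UNIV"
        unfolding a'_def using i by (intro sum_strict_mono_ex1) auto
      then have "zmoment a' c' \<noteq> 0 \<longleftrightarrow> a' = c'" by (rule less)
      moreover have "a' = c' \<longleftrightarrow> a = c"
      proof
        assume eq: "a' = c'"
        show "a = c"
        proof
          fix j
          show "a j = c j"
            using fun_cong[OF eq, of j] i False by (cases "j = i") (auto simp: a'_def c'_def)
        qed
      qed (simp add: a'_def c'_def)
      ultimately show ?thesis using reduce False by simp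
    qed (use reduce i in auto)
  qed
qed

lemma zmoment_eq_0_iff: "zmoment a c = 0 \<longleftrightarrow> a \<noteq> c"
  using zmoment_nonzero_iff by blast

section \<open>The projection onto holomorphic polynomials on D\<close>

lemma Pspace_diff: "f \<in> Pspace \<Longrightarrow> g \<in> Pspace \<Longrightarrow> (\<lambda>m. f m - g m) \<in> Pspace"
  unfolding Pspace_def by (auto intro: finite_subset[of _ "{m. f m \<noteq> 0} \<union> {m. g m \<noteq> 0}"])

lemma Hol_subset_Pspace: "Hol \<subseteq> Pspace" and Dsp_subset_Pspace: "Dsp \<subseteq> Pspace"
  unfolding Hol_def Dsp_def by auto

lemma Dsp_fst: "f \<in> Dsp \<Longrightarrow> f m \<noteq> 0 \<Longrightarrow> fst m = (\<lambda>i. 0)"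
  by (cases m) (auto simp: Dsp_def)

lemma Hol_snd: "g \<in> Hol \<Longrightarrow> g m \<noteq> 0 \<Longrightarrow> snd m = (\<lambda>i. 0)"
  by (cases m) (auto simp: Hol_def)

lemma DspI: "f \<in> Pspace \<Longrightarrow> (\<And>m. f m \<noteq> 0 \<Longrightarrow> fst m = (\<lambda>i. 0)) \<Longrightarrow> f \<in> Dsp"
  unfolding Dsp_def by blast

lemma Dsp_add:
  assumes f: "f \<in> Dsp" and g: "g \<in> Dsp"
  shows "(\<lambda>m. f m + g m) \<in> Dsp"
proof -
  have "(\<lambda>m. f m + g m) \<in> Pspace"
    using f g unfolding Dsp_def Pspace_def
    by (auto intro: finite_subset[of _ "{m. f m \<noteq> 0} \<union> {m. g m \<noteq> 0}"])
  moreover have "fst m = (\<lambda>i. 0)" if "f m + g m \<noteq> 0" for m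
    using that Dsp_fst[OF f, of m] Dsp_fst[OF g, of m] by fastforce
  ultimately show ?thesis by (rule DspI)
qed

lemma Dsp_scale: "f \<in> Dsp \<Longrightarrow> (\<lambda>m. c * f m) \<in> Dsp"
  unfolding Dsp_def Pspace_def by (auto intro: finite_subset[of _ "{m. f m \<noteq> 0}"])

lemma Dsp_sum: "finite F \<Longrightarrow> (\<And>p. p \<in> F \<Longrightarrow> g p \<in> Dsp) \<Longrightarrow> (\<lambda>m. \<Sum>p\<in>F. g p m) \<in> Dsp"
proof (induction F rule: finite_induct)
  case empty
  show ?case by (simp add: Dsp_def Pspace_def)
next
  case (insert p F)
  then show ?case by (simp add: Dsp_add)
qed

lemma zbar_Dsp: "zbar \<alpha> \<in> Dsp"
  unfolding Dsp_def Pspace_def zbar_def by (auto intro: finite_subset[of _ "{((\<lambda>i. 0), \<alpha>)}"])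

lemma Dsp_coeffs_finite: "g \<in> Dsp \<Longrightarrow> finite {\<alpha>. g ((\<lambda>i. 0), \<alpha>) \<noteq> 0}"
  using finite_vimageI[of "{m. g m \<noteq> 0}" "\<lambda>\<alpha>. ((\<lambda>i. 0), \<alpha>)"]
  by (auto simp: Dsp_def Pspace_def inj_on_def vimage_def)

lemma Dsp_expansion:
  fixes g :: "('n::finite) pol"
  assumes g: "g \<in> Dsp" and "finite A" and A: "{\<alpha>. g ((\<lambda>i. 0), \<alpha>) \<noteq> 0} \<subseteq> A"
  shows "g = (\<lambda>m. \<Sum>\<alpha>\<in>A. g ((\<lambda>i. 0), \<alpha>) * zbar \<alpha> m)"
proof
  fix m :: "'n mexp"
  obtain a b where m: "m = (a, b)" by (cases m)
  have "(\<Sum>\<alpha>\<in>A. g ((\<lambda>i. 0), \<alpha>) * zbar \<alpha> m) = (\<Sum>\<alpha>\<in>A. if \<alpha> = b then g m else 0)"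
    using Dsp_fst[OF g, of m] by (intro sum.cong) (auto simp: zbar_def m)
  also have "\<dots> = g m"
    using \<open>finite A\<close> A Dsp_fst[OF g, of m] by (auto simp: m)
  finally show "g m = (\<Sum>\<alpha>\<in>A. g ((\<lambda>i. 0), \<alpha>) * zbar \<alpha> m)" ..
qed

lemma peval_eq_sum:
  assumes "finite S" "{m. f m \<noteq> 0} \<subseteq> S"
  shows "peval f z = (\<Sum>m\<in>S. f m * zmonomial (fst m) (snd m) z)"
  unfolding peval_def zmonomial_def by (rule sum.mono_neutral_left) (use assms in auto)

lemma pinner_eq_0_iff: "pinner f g = 0 \<longleftrightarrow> gaussian_integral (\<lambda>z. peval f z * cnj (peval g z)) = 0"
  unfolding pinner_def gaussian_integral_def by (simp add: mult.assoc)

lemma gaussian_integral_peval_cnj: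
  fixes f g :: "('n::finite) pol"
  assumes S: "finite S" "{m. f m \<noteq> 0} \<subseteq> S" and S': "finite S'" "{m. g m \<noteq> 0} \<subseteq> S'"
  shows "gaussian_integral (\<lambda>z. peval f z * cnj (peval g z)) =
    (\<Sum>m\<in>S. \<Sum>m'\<in>S'. f m * cnj (g m') * zmoment (\<lambda>i. fst m i + snd m' i) (\<lambda>i. snd m i + fst m' i))"
proof -
  define T where "T m m' = (\<lambda>z. f m * cnj (g m') *
      zmonomial (\<lambda>i. fst m i + snd m' i) (\<lambda>i. snd m i + fst m' i) z)" for m m' :: "'n mexp"
  have int: "gaussian_integrable (T m m')" for m m'
    unfolding T_def by (intro gaussian_integrable_cmult gaussian_integrable_zmonomial)
  have "peval f z * cnj (peval g z) = (\<Sum>m\<in>S. \<Sum>m'\<in>S'. T m m' z)" for z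
  proof -
    have "zmonomial (fst m) (snd m) z * zmonomial (snd m') (fst m') z =
        zmonomial (\<lambda>i. fst m i + snd m' i) (\<lambda>i. snd m i + fst m' i) z" for m m'
      unfolding zmonomial_def by (simp add: prod.distrib[symmetric] power_add mult_ac)
    then show ?thesis
      by (simp add: T_def peval_eq_sum[OF S] peval_eq_sum[OF S'] cnj_sum cnj_zmonomial sum_product mult_ac)
  qed
  then have "gaussian_integral (\<lambda>z. peval f z * cnj (peval g z)) =
      (\<Sum>m\<in>S. \<Sum>m'\<in>S'. gaussian_integral (T m m'))"
    by (simp add: gaussian_integral_sum gaussian_integrable_sum int)
  then show ?thesis
    by (simp add: T_def gaussian_integral_cmult zmoment_def)
qed

lemma gaussian_integral_peval_cnj_Hol:
  fixes f g :: "('n::finite) pol"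
  assumes f: "f \<in> Pspace" and split: "\<And>m. f m \<noteq> 0 \<Longrightarrow> fst m = (\<lambda>i. 0) \<or> snd m = (\<lambda>i. 0)"
    and g: "g \<in> Hol"
  shows "gaussian_integral (\<lambda>z. peval f z * cnj (peval g z)) =
    (\<Sum>m\<in>{m. g m \<noteq> 0}. f m * cnj (g m) * zmoment (fst m) (fst m))"
proof -
  let ?S = "{m. f m \<noteq> 0}" and ?S' = "{m. g m \<noteq> 0}"
  let ?T = "\<lambda>m m'. f m * cnj (g m') * zmoment (\<lambda>i. fst m i + snd m' i) (\<lambda>i. snd m i + fst m' i)"
  have fin: "finite ?S" "finite ?S'" using f g by (auto simp: Pspace_def Hol_def)
  have diag: "(\<Sum>m\<in>?S. ?T m m') = f m' * cnj (g m') * zmoment (fst m') (fst m')" if "m' \<in> ?S'" for m'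
  proof -
    have snd_m': "snd m' = (\<lambda>i. 0)" using g that by (cases m') (auto simp: Hol_def)
    have "?T m m' = 0" if "m \<in> ?S" "m \<noteq> m'" for m
    proof -
      have "(\<lambda>i. fst m i + snd m' i) \<noteq> (\<lambda>i. snd m i + fst m' i)"
        using split[of m] that snd_m' by (cases m, cases m') (fastforce simp: fun_eq_iff)
      then have "zmoment (\<lambda>i. fst m i + snd m' i) (\<lambda>i. snd m i + fst m' i) = 0"
        unfolding zmoment_eq_0_iff .
      then show ?thesis by simp
    qed
    then have "(\<Sum>m\<in>?S. ?T m m') = (\<Sum>m\<in>?S. if m = m' then ?T m' m' else 0)"
      by (intro sum.cong) auto
    also have "\<dots> = ?T m' m'" using fin by auto
    finally show ?thesis using snd_m' by simp
  qed
  have "gaussian_integral (\<lambda>z. peval f z * cnj (peval g z)) = (\<Sum>m'\<in>?S'. \<Sum>m\<in>?S. ?T m m')"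
    by (subst sum.swap) (rule gaussian_integral_peval_cnj[OF fin(1) order_refl fin(2) order_refl])
  also have "\<dots> = (\<Sum>m\<in>?S'. f m * cnj (g m) * zmoment (fst m) (fst m))"
    using diag by simp
  finally show ?thesis .
qed

lemma orthogonal_Hol_iff:
  fixes p :: "('n::finite) pol"
  assumes p: "p \<in> Pspace" and split: "\<And>m. p m \<noteq> 0 \<Longrightarrow> fst m = (\<lambda>i. 0) \<or> snd m = (\<lambda>i. 0)"
  shows "(\<forall>g\<in>Hol. pinner p g = 0) \<longleftrightarrow> (\<forall>\<gamma>. p (\<gamma>, \<lambda>i. 0) = 0)"
proof
  assume orth: "\<forall>g\<in>Hol. pinner p g = 0"
  show "\<forall>\<gamma>. p (\<gamma>, \<lambda>i. 0) = 0"
  proof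
    fix \<gamma> :: "'n \<Rightarrow> nat"
    define g :: "'n pol" where "g m = (if m = (\<gamma>, \<lambda>i. 0) then 1 else 0)" for m
    have supp: "{m. g m \<noteq> 0} = {(\<gamma>, \<lambda>i. 0)}" by (auto simp: g_def)
    have g: "g \<in> Hol" unfolding Hol_def Pspace_def supp by (auto simp: g_def)
    have "0 = gaussian_integral (\<lambda>z. peval p z * cnj (peval g z))"
      using orth g by (simp only: pinner_eq_0_iff)
    also have "\<dots> = p (\<gamma>, \<lambda>i. 0) * zmoment \<gamma> \<gamma>"
      by (subst gaussian_integral_peval_cnj_Hol[OF p _ g]) (simp_all add: split supp g_def)
    finally show "p (\<gamma>, \<lambda>i. 0) = 0" using zmoment_nonzero_iff[of \<gamma> \<gamma>] by simp
  qed
next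
  assume zero: "\<forall>\<gamma>. p (\<gamma>, \<lambda>i. 0) = 0"
  show "\<forall>g\<in>Hol. pinner p g = 0"
  proof
    fix g :: "'n pol"
    assume g: "g \<in> Hol"
    have "p m = 0" if "g m \<noteq> 0" for m
      using Hol_snd[OF g that] zero by (cases m) auto
    then show "pinner p g = 0"
      unfolding pinner_eq_0_iff
      by (subst gaussian_integral_peval_cnj_Hol[OF p _ g]) (simp_all add: split)
  qed
qed

lemma rho00t_Dsp:
  fixes f :: "('n::finite) pol"
  assumes f: "f \<in> Dsp"
  shows "rho00t f = (\<lambda>m. if m = ((\<lambda>i. 0), (\<lambda>i. 0)) then f m else 0)"
  unfolding rho00t_def
proof (rule the_equality)
  let ?o = "\<lambda>i::'n. 0::nat"
  let ?h = "\<lambda>m. if m = (?o, ?o) then f m else 0"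
  have h: "?h \<in> Hol"
    unfolding Hol_def Pspace_def by (auto intro: finite_subset[of _ "{(?o, ?o)}"])
  then have "(\<lambda>m. f m - ?h m) \<in> Pspace"
    using f Dsp_subset_Pspace Hol_subset_Pspace by (intro Pspace_diff) blast+
  moreover have "fst m = ?o \<or> snd m = ?o" if "f m - ?h m \<noteq> 0" for m
    using that Dsp_fst[OF f, of m] by (cases "m = (?o, ?o)") simp_all
  moreover have "\<forall>\<gamma>. f (\<gamma>, ?o) - ?h (\<gamma>, ?o) = 0"
    using Dsp_fst[OF f] by fastforce
  ultimately have "\<forall>g\<in>Hol. pinner (\<lambda>m. f m - ?h m) g = 0"
    by (rule orthogonal_Hol_iff[THEN iffD2])
  with h show "?h \<in> Hol \<and> (\<forall>g\<in>Hol. pinner (\<lambda>m. f m - ?h m) g = 0)" ..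
next
  fix h :: "'n pol"
  assume "h \<in> Hol \<and> (\<forall>g\<in>Hol. pinner (\<lambda>m. f m - h m) g = 0)"
  then have h: "h \<in> Hol" and orth: "\<forall>g\<in>Hol. pinner (\<lambda>m. f m - h m) g = 0" by auto
  have "(\<lambda>m. f m - h m) \<in> Pspace"
    using f h Dsp_subset_Pspace Hol_subset_Pspace by (blast intro: Pspace_diff)
  moreover have "fst m = (\<lambda>i. 0) \<or> snd m = (\<lambda>i. 0)" if "f m - h m \<noteq> 0" for m
    using that Dsp_fst[OF f, of m] Hol_snd[OF h, of m] by (cases "f m = 0") auto
  ultimately have h_eq_f: "\<forall>\<gamma>. f (\<gamma>, \<lambda>i. 0) - h (\<gamma>, \<lambda>i. 0) = 0"
    using orth by (rule orthogonal_Hol_iff[THEN iffD1])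
  show "h = (\<lambda>m. if m = ((\<lambda>i. 0), (\<lambda>i. 0)) then f m else 0)"
  proof
    fix m :: "'n mexp"
    obtain a b where m: "m = (a, b)" by (cases m)
    show "h m = (if m = ((\<lambda>i. 0), (\<lambda>i. 0)) then f m else 0)"
    proof (cases "b = (\<lambda>i. 0)")
      case True
      then show ?thesis using h_eq_f Dsp_fst[OF f, of m] m by auto
    next
      case False
      then show ?thesis using Hol_snd[OF h, of m] m by auto
    qed
  qed
qed

section \<open>The operators rhot on D\<close>

lemma some_distinct_UNIV_list:
  defines "xs \<equiv> SOME xs. distinct xs \<and> set xs = (UNIV :: 'n::finite set)"
  shows "distinct xs" and "set xs = UNIV"
proof -
  have "\<exists>xs::'n list. distinct xs \<and> set xs = UNIV"
    using finite_distinct_list[of "UNIV :: 'n set"] by auto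
  then show "distinct xs" and "set xs = UNIV"
    unfolding xs_def by (metis (mono_tags, lifting) someI_ex)+
qed

lemma opow_shift:
  fixes A :: "'n \<Rightarrow> ('n::finite) pol \<Rightarrow> 'n pol"
  assumes A: "\<And>i k H a b. (A i ^^ k) H (a, b) = w i k (b i) * H (a, b(i := s i k (b i)))"
  shows "opow A \<alpha> H (a, b) = (\<Prod>i\<in>UNIV. w i (\<alpha> i) (b i)) * H (a, \<lambda>j. s j (\<alpha> j) (b j))"
proof -
  have foldr_eq: "foldr (\<lambda>i g. (A i ^^ \<alpha> i) \<circ> g) xs id H (a, b) =
      (\<Prod>i\<in>set xs. w i (\<alpha> i) (b i)) * H (a, \<lambda>j. if j \<in> set xs then s j (\<alpha> j) (b j) else b j)"
    if "distinct xs" for xs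
    using that
  proof (induction xs arbitrary: b)
    case (Cons x xs)
    then have x: "x \<notin> set xs" and "distinct xs" by auto
    note IH = Cons.IH[OF \<open>distinct xs\<close>]
    let ?b = "b(x := s x (\<alpha> x) (b x))"
    have "(\<Prod>i\<in>set xs. w i (\<alpha> i) (?b i)) = (\<Prod>i\<in>set xs. w i (\<alpha> i) (b i))"
      using x by (intro prod.cong) auto
    moreover have "(\<lambda>j. if j \<in> set xs then s j (\<alpha> j) (?b j) else ?b j) =
        (\<lambda>j. if j \<in> set (x # xs) then s j (\<alpha> j) (b j) else b j)"
      using x by auto
    moreover have "foldr (\<lambda>i g. (A i ^^ \<alpha> i) \<circ> g) (x # xs) id H (a, b) =
        w x (\<alpha> x) (b x) * foldr (\<lambda>i g. (A i ^^ \<alpha> i) \<circ> g) xs id H (a, ?b)"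
      by (simp only: foldr.simps comp_apply A)
    ultimately show ?case using x by (simp only: IH) (simp add: mult.assoc)
  qed simp
  show ?thesis
    unfolding opow_def foldr_eq[OF some_distinct_UNIV_list(1)] some_distinct_UNIV_list(2) by simp
qed

lemma funpow_cong_invariant:
  assumes eq: "\<And>h. P h \<Longrightarrow> f h = g h" and inv: "\<And>h. P h \<Longrightarrow> P (g h)" and "P h"
  shows "(f ^^ k) h = (g ^^ k) h \<and> P ((g ^^ k) h)"
proof (induction k)
  case (Suc k)
  then have IH: "(f ^^ k) h = (g ^^ k) h" and P: "P ((g ^^ k) h)" by auto
  show ?case
    unfolding funpow.simps comp_apply IH eq[OF P] using inv[OF P] by simp
qed (simp add: \<open>P h\<close>)

lemma opow_cong:
  fixes A B :: "'n \<Rightarrow> ('n::finite) pol \<Rightarrow> 'n pol"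
  assumes eq: "\<And>i h. P h \<Longrightarrow> A i h = B i h" and inv: "\<And>i h. P h \<Longrightarrow> P (B i h)" and "P H"
  shows "opow A \<alpha> H = opow B \<alpha> H"
proof -
  have funpow: "(A i ^^ k) h = (B i ^^ k) h \<and> P ((B i ^^ k) h)" if "P h" for i k h
    by (rule funpow_cong_invariant[where f="A i" and g="B i" and P=P], erule eq, erule inv, rule that)
  let ?FA = "\<lambda>xs. foldr (\<lambda>i g. (A i ^^ \<alpha> i) \<circ> g) xs id H"
  let ?FB = "\<lambda>xs. foldr (\<lambda>i g. (B i ^^ \<alpha> i) \<circ> g) xs id H"
  have "?FA xs = ?FB xs \<and> P (?FB xs)" for xs
  proof (induction xs)
    case (Cons x xs)
    note IH = conjunct1[OF Cons.IH] and P = conjunct2[OF Cons.IH]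
    have "?FA (x # xs) = (A x ^^ \<alpha> x) (?FB xs)" "?FB (x # xs) = (B x ^^ \<alpha> x) (?FB xs)"
      unfolding foldr.simps comp_apply IH by simp_all
    then show ?case using funpow[OF P, where i=x and k="\<alpha> x"] by (simp only:)
  qed (simp add: \<open>P H\<close>)
  then show ?thesis unfolding opow_def by blast
qed

lemma dbar_funpow: "(dbar i ^^ k) H (a, b) = of_nat (pochhammer (b i + 1) k) * H (a, b(i := b i + k))"
proof (induction k arbitrary: b)
  case (Suc k)
  have "(dbar i ^^ Suc k) H (a, b) = of_nat (b i + 1) * (dbar i ^^ k) H (a, b(i := b i + 1))"
    by (simp add: dbar_def)
  also have "\<dots> = of_nat (b i + 1) * (of_nat (pochhammer (b i + 1 + 1) k) * H (a, b(i := b i + 1 + k)))"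
    unfolding Suc[of "b(i := b i + 1)"] fun_upd_same fun_upd_upd ..
  also have "\<dots> = of_nat (pochhammer (b i + 1) (Suc k)) * H (a, b(i := b i + Suc k))"
    by (simp add: pochhammer_rec ring_distribs)
  finally show ?case .
qed simp

lemma mulzbar_funpow:
  "(mulzbar i ^^ k) H (a, b) = (if k \<le> b i then H (a, b(i := b i - k)) else 0)"
proof (induction k arbitrary: b)
  case (Suc k)
  have "(mulzbar i ^^ Suc k) H (a, b) = (if b i = 0 then 0 else (mulzbar i ^^ k) H (a, b(i := b i - 1)))"
    by (simp add: mulzbar_def)
  also have "\<dots> = (if b i = 0 then 0 else if k \<le> b i - 1 then H (a, b(i := b i - 1 - k)) else 0)"
    unfolding Suc[of "b(i := b i - 1)"] fun_upd_same fun_upd_upd ..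
  also have "\<dots> = (if Suc k \<le> b i then H (a, b(i := b i - Suc k)) else 0)"
    by (cases "b i") simp_all
  finally show ?case .
qed simp

lemma opow_dbar:
  "opow dbar \<beta> H (a, b) = of_nat (\<Prod>i\<in>UNIV. pochhammer (b i + 1) (\<beta> i)) * H (a, \<lambda>j. b j + \<beta> j)"
  by (subst opow_shift[OF dbar_funpow]) (simp add: of_nat_prod)

lemma opow_mulzbar:
  "opow mulzbar \<alpha> H (a, b) = (if \<forall>i. \<alpha> i \<le> b i then H (a, \<lambda>j. b j - \<alpha> j) else 0)"
  by (subst opow_shift[where w="\<lambda>i k x. if k \<le> x then 1 else 0" and s="\<lambda>i k x. x - k"])
     (auto simp: mulzbar_funpow prod_zero_iff)

lemma astar_eq_mulzbar:
  assumes "\<forall>m. h m \<noteq> 0 \<longrightarrow> fst m = (\<lambda>i. 0)"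
  shows "astar i h = mulzbar i h"
proof -
  have "dz i h m = 0" for m
  proof (cases m)
    case (Pair a b)
    have "a(i := a i + 1) \<noteq> (\<lambda>i. 0)" by (auto simp: fun_eq_iff)
    then show ?thesis using assms by (auto simp: dz_def Pair)
  qed
  then show ?thesis by (simp add: astar_def)
qed

lemma mulzbar_preserves_antiholomorphic:
  assumes "\<forall>m. h m \<noteq> 0 \<longrightarrow> fst m = (\<lambda>i. 0)"
  shows "\<forall>m. mulzbar i h m \<noteq> 0 \<longrightarrow> fst m = (\<lambda>i. 0)"
  using assms by (auto simp: mulzbar_def split: if_splits)

lemma opow_astar_const:
  fixes \<alpha> :: "'n::finite \<Rightarrow> nat" and v :: complex
  defines "H \<equiv> \<lambda>m. if m = ((\<lambda>i. 0), (\<lambda>i. 0)) then v else 0"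
  shows "opow astar \<alpha> H = (\<lambda>m. v * zbar \<alpha> m)"
proof
  fix m :: "'n mexp"
  obtain a b where m: "m = (a, b)" by (cases m)
  have "opow astar \<alpha> H = opow mulzbar \<alpha> H"
    by (rule opow_cong[where P="\<lambda>h. \<forall>m. h m \<noteq> 0 \<longrightarrow> fst m = (\<lambda>i. 0)"],
        erule astar_eq_mulzbar, erule mulzbar_preserves_antiholomorphic) (simp add: H_def)
  then have "opow astar \<alpha> H m = opow mulzbar \<alpha> H (a, b)" by (simp add: m)
  also have "\<dots> = (if \<forall>i. \<alpha> i \<le> b i then H (a, \<lambda>j. b j - \<alpha> j) else 0)"
    by (rule opow_mulzbar)
  also have "\<dots> = v * zbar \<alpha> m"
  proof -
    have "(\<forall>i. \<alpha> i \<le> b i) \<and> (\<lambda>j. b j - \<alpha> j) = (\<lambda>i. 0) \<longleftrightarrow> b = \<alpha>"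
      by (auto simp: fun_eq_iff intro: le_antisym)
    then show ?thesis by (auto simp: H_def zbar_def m)
  qed
  finally show "opow astar \<alpha> H m = v * zbar \<alpha> m" .
qed

lemma opow_dbar_Dsp:
  assumes f: "f \<in> Dsp"
  shows "opow dbar \<beta> f \<in> Dsp"
proof -
  have sub: "{m. opow dbar \<beta> f m \<noteq> 0} \<subseteq> (\<lambda>(a, b). (a, \<lambda>j. b j - \<beta> j)) ` {m. f m \<noteq> 0}"
  proof
    fix m assume "m \<in> {m. opow dbar \<beta> f m \<noteq> 0}"
    moreover obtain a b where m: "m = (a, b)" by (cases m)
    ultimately have "f (a, \<lambda>j. b j + \<beta> j) \<noteq> 0" by (simp add: opow_dbar)
    then show "m \<in> (\<lambda>(a, b). (a, \<lambda>j. b j - \<beta> j)) ` {m. f m \<noteq> 0}"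
      by (auto simp: m image_iff intro!: exI[of _ "(a, \<lambda>j. b j + \<beta> j)"])
  qed
  have "finite {m. f m \<noteq> 0}" using f by (simp add: Dsp_def Pspace_def)
  then have "finite {m. opow dbar \<beta> f m \<noteq> 0}" using sub by (rule finite_surj)
  moreover have "fst m = (\<lambda>i. 0)" if "opow dbar \<beta> f m \<noteq> 0" for m
    using that Dsp_fst[OF f] by (cases m) (fastforce simp: opow_dbar)
  ultimately show ?thesis by (auto simp: Dsp_def Pspace_def)
qed

lemma mfact_pos: "0 < mfact \<alpha>"
  unfolding mfact_def by (rule prod_pos) auto

lemma rhot_Dsp:
  fixes f :: "('n::finite) pol"
  assumes f: "f \<in> Dsp"
  shows "rhot \<alpha> \<beta> f = rho \<alpha> \<beta> f"
proof -
  let ?o = "\<lambda>i::'n. 0::nat"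
  let ?c = "complex_of_real (mfact \<beta>) * f (?o, \<beta>)"
  have "(\<Prod>i\<in>UNIV. pochhammer (0 + 1) (\<beta> i)) = (\<Prod>i\<in>UNIV. fact (\<beta> i) :: nat)"
    by (simp add: pochhammer_fact)
  moreover have "complex_of_real (mfact \<beta>) = of_nat (\<Prod>i\<in>UNIV. fact (\<beta> i))"
    by (simp add: mfact_def of_nat_prod)
  ultimately have "opow dbar \<beta> f (?o, ?o) = ?c"
    by (simp add: opow_dbar)
  moreover have "rho00t (opow dbar \<beta> f) = (\<lambda>m. if m = (?o, ?o) then opow dbar \<beta> f (?o, ?o) else 0)"
    unfolding rho00t_Dsp[OF opow_dbar_Dsp[OF f]] by auto
  ultimately have rho00t_part: "opow astar \<alpha> (rho00t (opow dbar \<beta> f)) = (\<lambda>m. ?c * zbar \<alpha> m)"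
    by (simp only: opow_astar_const)
  have "1 / sqrt (mfact \<alpha> * mfact \<beta>) * mfact \<beta> = sqrt (mfact \<beta>) / sqrt (mfact \<alpha>)"
    using mfact_pos[of \<alpha>] mfact_pos[of \<beta>] by (simp add: real_sqrt_mult field_simps)
  then have coeff: "complex_of_real (1 / sqrt (mfact \<alpha> * mfact \<beta>)) * complex_of_real (mfact \<beta>) =
      complex_of_real (sqrt (mfact \<beta>) / sqrt (mfact \<alpha>))"
    by (simp only: of_real_mult[symmetric])
  have "rhot \<alpha> \<beta> f = (\<lambda>m. complex_of_real (1 / sqrt (mfact \<alpha> * mfact \<beta>)) * (?c * zbar \<alpha> m))"
    unfolding rhot_def rho00t_part ..
  also have "\<dots> = (\<lambda>m. f (?o, \<beta>) * complex_of_real (sqrt (mfact \<beta>) / sqrt (mfact \<alpha>)) * zbar \<alpha> m)"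
    unfolding coeff[symmetric] by (simp only: mult_ac)
  also have "\<dots> = rho \<alpha> \<beta> f"
    using f by (simp add: rho_def)
  finally show ?thesis .
qed

section \<open>Finite linear combinations of the rho\<close>

lemma Send_sum:
  assumes s: "s \<in> Send" and "finite B"
  shows "s (\<lambda>m. \<Sum>\<beta>\<in>B. v \<beta> * zbar \<beta> m) = (\<lambda>m. \<Sum>\<beta>\<in>B. v \<beta> * s (zbar \<beta>) m)"
  using \<open>finite B\<close>
proof (induction B rule: finite_induct)
  case empty
  have "s (\<lambda>m. 0 * zbar (\<lambda>i. 0) m) = (\<lambda>m. 0 * s (zbar (\<lambda>i. 0)) m)"
    using s zbar_Dsp unfolding Send_def by blast
  then show ?case by simp
next
  case (insert \<beta> B)
  have add: "s (\<lambda>m. f m + g m) = (\<lambda>m. s f m + s g m)" if "f \<in> Dsp" "g \<in> Dsp" for f g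
    using s that unfolding Send_def by blast
  have scale: "s (\<lambda>m. c * f m) = (\<lambda>m. c * s f m)" if "f \<in> Dsp" for c f
    using s that unfolding Send_def by blast
  have "(\<lambda>m. \<Sum>\<beta>\<in>B. v \<beta> * zbar \<beta> m) \<in> Dsp"
    by (intro Dsp_sum Dsp_scale zbar_Dsp insert.hyps)
  then show ?case
    using insert by (simp add: add Dsp_scale zbar_Dsp scale[OF zbar_Dsp])
qed

definition lincomb ::
  "(('n \<Rightarrow> nat) \<times> ('n \<Rightarrow> nat)) set \<Rightarrow> (('n \<Rightarrow> nat) \<times> ('n \<Rightarrow> nat) \<Rightarrow> complex) \<Rightarrow>
    (('n \<Rightarrow> nat) \<Rightarrow> ('n \<Rightarrow> nat) \<Rightarrow> ('n::finite) pol \<Rightarrow> 'n pol) \<Rightarrow> 'n pol \<Rightarrow> 'n pol" where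
  "lincomb F c R f = (\<lambda>m. \<Sum>p\<in>F. c p * R (fst p) (snd p) f m)"

lemma Stilde_eq: "Stilde = {restrict (lincomb F c rhot) Pspace | F c. finite F}"
  unfolding Stilde_def lincomb_def ..

lemma lincomb_zero_extend:
  "finite G \<Longrightarrow> F \<subseteq> G \<Longrightarrow> lincomb F c R = lincomb G (\<lambda>p. if p \<in> F then c p else 0) R"
  unfolding lincomb_def by (intro ext sum.mono_neutral_cong_left) auto

definition rho_coeff :: "('n::finite \<Rightarrow> nat) \<Rightarrow> ('n \<Rightarrow> nat) \<Rightarrow> complex" where
  "rho_coeff \<alpha> \<beta> = complex_of_real (sqrt (mfact \<beta>) / sqrt (mfact \<alpha>))"

lemma rho_coeff_nonzero: "rho_coeff \<alpha> \<beta> \<noteq> 0"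
  using mfact_pos[of \<alpha>] mfact_pos[of \<beta>] unfolding rho_coeff_def by simp

lemma rho_Dsp: "f \<in> Dsp \<Longrightarrow> rho \<alpha> \<beta> f = (\<lambda>m. f ((\<lambda>i. 0), \<beta>) * rho_coeff \<alpha> \<beta> * zbar \<alpha> m)"
  unfolding rho_def rho_coeff_def by simp

lemma lincomb_rho_Dsp:
  "f \<in> Dsp \<Longrightarrow> lincomb F c rho f =
    (\<lambda>m. \<Sum>p\<in>F. c p * f ((\<lambda>i. 0), snd p) * rho_coeff (fst p) (snd p) * zbar (fst p) m)"
  unfolding lincomb_def by (simp add: rho_Dsp mult.assoc)

lemma lincomb_rho_in_Dsp: "finite F \<Longrightarrow> f \<in> Dsp \<Longrightarrow> lincomb F c rho f \<in> Dsp"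
  by (subst lincomb_rho_Dsp) (auto intro!: Dsp_sum Dsp_scale zbar_Dsp)

lemma lincomb_rho_linear:
  assumes "f \<in> Dsp" "g \<in> Dsp"
  shows "lincomb F c rho (\<lambda>m. a * f m + b * g m) = (\<lambda>m. a * lincomb F c rho f m + b * lincomb F c rho g m)"
proof -
  have "(\<lambda>m. a * f m + b * g m) \<in> Dsp" using assms by (intro Dsp_add Dsp_scale)
  then show ?thesis
    using assms
    by (simp add: lincomb_rho_Dsp fun_eq_iff sum_distrib_left sum.distrib[symmetric] algebra_simps)
qed

lemma lincomb_rho_coeff:
  assumes "finite F"
  shows "lincomb F c rho (zbar \<beta>) ((\<lambda>i. 0), \<alpha>) = (if (\<alpha>, \<beta>) \<in> F then c (\<alpha>, \<beta>) else 0) * rho_coeff \<alpha> \<beta>"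
proof -
  have "lincomb F c rho (zbar \<beta>) ((\<lambda>i. 0), \<alpha>) = (\<Sum>p\<in>F. if p = (\<alpha>, \<beta>) then c p * rho_coeff \<alpha> \<beta> else 0)"
    unfolding lincomb_rho_Dsp[OF zbar_Dsp] by (intro sum.cong) (auto simp: zbar_def)
  also have "\<dots> = (if (\<alpha>, \<beta>) \<in> F then c (\<alpha>, \<beta>) else 0) * rho_coeff \<alpha> \<beta>"
    using assms by simp
  finally show ?thesis .
qed

lemma res_lincomb_rhot: "res (restrict (lincomb F c rhot) Pspace) = restrict (lincomb F c rho) Dsp"
  unfolding res_def using Dsp_subset_Pspace
  by (auto simp: fun_eq_iff lincomb_def rhot_Dsp restrict_def)

lemma Stilde_preserves_Dsp:
  assumes "T \<in> Stilde" and f: "f \<in> Dsp"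
  shows "T f \<in> Dsp"
proof -
  obtain F c where "finite F" and T: "T = restrict (lincomb F c rhot) Pspace"
    using assms(1) unfolding Stilde_eq by blast
  have "T f = res T f" using f by (simp add: res_def)
  also have "\<dots> = lincomb F c rho f" using f by (simp add: T res_lincomb_rhot)
  finally show ?thesis using lincomb_rho_in_Dsp[OF \<open>finite F\<close> f] by simp
qed

lemma res_rhot: "res (restrict (rhot \<alpha> \<beta>) Pspace) = rho \<alpha> \<beta>"
  unfolding res_def rho_def using Dsp_subset_Pspace
  by (auto simp: fun_eq_iff restrict_def rhot_Dsp rho_Dsp rho_coeff_def)

lemma inj_on_res_Stilde: "inj_on res Stilde"
proof (rule inj_onI)
  fix T1 T2 :: "'n::finite pol \<Rightarrow> 'n pol"
  assume "T1 \<in> Stilde" "T2 \<in> Stilde" and eq: "res T1 = res T2"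
  then obtain F1 c1 F2 c2 where F1: "finite F1" and T1: "T1 = restrict (lincomb F1 c1 rhot) Pspace"
    and F2: "finite F2" and T2: "T2 = restrict (lincomb F2 c2 rhot) Pspace"
    unfolding Stilde_eq by blast
  define G where "G = F1 \<union> F2"
  define d1 where "d1 p = (if p \<in> F1 then c1 p else 0)" for p
  define d2 where "d2 p = (if p \<in> F2 then c2 p else 0)" for p
  have "d1 p = d2 p" for p
  proof -
    obtain \<alpha> \<beta> where p: "p = (\<alpha>, \<beta>)" by (cases p)
    have "lincomb F1 c1 rho (zbar \<beta>) = lincomb F2 c2 rho (zbar \<beta>)"
      using fun_cong[OF eq, of "zbar \<beta>"] by (simp add: T1 T2 res_lincomb_rhot zbar_Dsp)
    then show "d1 p = d2 p"
      using lincomb_rho_coeff[OF F1, of c1 \<beta> \<alpha>] lincomb_rho_coeff[OF F2, of c2 \<beta> \<alpha>]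
      by (simp add: d1_def d2_def p rho_coeff_nonzero)
  qed
  then have "d1 = d2" by (rule ext)
  moreover have "lincomb F1 c1 rhot = lincomb G d1 rhot" "lincomb F2 c2 rhot = lincomb G d2 rhot"
    unfolding G_def d1_def d2_def using F1 F2 by (auto intro: lincomb_zero_extend)
  ultimately show "T1 = T2" by (simp add: T1 T2)
qed

lemma res_Stilde_in_Send:
  assumes "T \<in> Stilde"
  shows "res T \<in> Send"
proof -
  obtain F c where F: "finite F" and T: "T = restrict (lincomb F c rhot) Pspace"
    using assms unfolding Stilde_eq by blast
  have rT: "res T = restrict (lincomb F c rho) Dsp" by (simp add: T res_lincomb_rhot)
  have "{\<gamma>. res T (zbar \<gamma>) \<noteq> (\<lambda>m. 0)} \<subseteq> snd ` F"
  proof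
    fix \<gamma> assume "\<gamma> \<in> {\<gamma>. res T (zbar \<gamma>) \<noteq> (\<lambda>m. 0)}"
    then obtain m where "lincomb F c rho (zbar \<gamma>) m \<noteq> 0" by (auto simp: rT zbar_Dsp fun_eq_iff)
    then obtain p where "p \<in> F" "zbar \<gamma> ((\<lambda>i. 0), snd p) \<noteq> 0"
      by (auto simp: lincomb_rho_Dsp[OF zbar_Dsp] elim: sum.not_neutral_contains_not_neutral)
    then show "\<gamma> \<in> snd ` F" by (auto simp: zbar_def split: if_splits)
  qed
  then have "finite {\<gamma>. res T (zbar \<gamma>) \<noteq> (\<lambda>m. 0)}" using F finite_subset by blast
  moreover have "res T (\<lambda>m. f m + g m) = (\<lambda>m. res T f m + res T g m)" if "f \<in> Dsp" "g \<in> Dsp" for f g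
    using lincomb_rho_linear[OF that, of F c 1 1] Dsp_add[OF that] that by (simp add: rT)
  moreover have "res T (\<lambda>m. k * f m) = (\<lambda>m. k * res T f m)" if "f \<in> Dsp" for k f
    using lincomb_rho_linear[OF that that, of F c k 0] Dsp_scale[OF that] that by (simp add: rT)
  ultimately show ?thesis
    unfolding Send_def using lincomb_rho_in_Dsp[OF F] by (simp add: rT)
qed

lemma Send_in_res_Stilde:
  fixes s :: "('n::finite) pol \<Rightarrow> 'n pol"
  assumes s: "s \<in> Send"
  shows "s \<in> res ` Stilde"
proof -
  let ?o = "\<lambda>i::'n. 0::nat"
  define B where "B = {\<beta>. s (zbar \<beta>) \<noteq> (\<lambda>m. 0)}"
  define A where "A = (\<Union>\<beta>\<in>B. {\<alpha>. s (zbar \<beta>) (?o, \<alpha>) \<noteq> 0})"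
  define c where "c p = s (zbar (snd p)) (?o, fst p) / rho_coeff (fst p) (snd p)" for p
  have sD: "s f \<in> Dsp" if "f \<in> Dsp" for f using s that unfolding Send_def by blast
  have B: "finite B" using s unfolding B_def Send_def by blast
  have A: "finite A" unfolding A_def using B Dsp_coeffs_finite[OF sD[OF zbar_Dsp]] by blast
  have expand: "s (zbar \<beta>) = (\<lambda>m. \<Sum>\<alpha>\<in>A. s (zbar \<beta>) (?o, \<alpha>) * zbar \<alpha> m)" if "\<beta> \<in> B" for \<beta>
    using that by (intro Dsp_expansion[OF sD[OF zbar_Dsp] A]) (auto simp: A_def)
  have "lincomb (A \<times> B) c rho f = s f" if f: "f \<in> Dsp" for f
  proof
    fix m
    let ?B' = "B \<union> {\<beta>. f (?o, \<beta>) \<noteq> 0}"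
    have B': "finite ?B'" using B Dsp_coeffs_finite[OF f] by simp
    have "lincomb (A \<times> B) c rho f m =
        (\<Sum>\<alpha>\<in>A. \<Sum>\<beta>\<in>B. c (\<alpha>, \<beta>) * f (?o, \<beta>) * rho_coeff \<alpha> \<beta> * zbar \<alpha> m)"
      by (simp add: lincomb_rho_Dsp[OF f] sum.cartesian_product')
    also have "\<dots> = (\<Sum>\<beta>\<in>B. f (?o, \<beta>) * (\<Sum>\<alpha>\<in>A. s (zbar \<beta>) (?o, \<alpha>) * zbar \<alpha> m))"
      by (subst sum.swap) (simp add: c_def rho_coeff_nonzero sum_distrib_left mult_ac)
    also have "\<dots> = (\<Sum>\<beta>\<in>B. f (?o, \<beta>) * s (zbar \<beta>) m)"
      by (intro sum.cong refl) (simp add: expand)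
    also have "\<dots> = (\<Sum>\<beta>\<in>?B'. f (?o, \<beta>) * s (zbar \<beta>) m)"
      using B' by (intro sum.mono_neutral_left) (auto simp: B_def)
    also have "\<dots> = s (\<lambda>m. \<Sum>\<beta>\<in>?B'. f (?o, \<beta>) * zbar \<beta> m) m"
      by (simp add: Send_sum[OF s B'])
    also have "\<dots> = s f m"
      using Dsp_expansion[OF f B'] by auto
    finally show "lincomb (A \<times> B) c rho f m = s f m" .
  qed
  then have "res (restrict (lincomb (A \<times> B) c rhot) Pspace) = s"
    using s unfolding res_lincomb_rhot Send_def by (auto simp: fun_eq_iff restrict_def extensional_def)
  moreover have "restrict (lincomb (A \<times> B) c rhot) Pspace \<in> Stilde"
    unfolding Stilde_eq using A B by blast
  ultimately show ?thesis by blast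
qed

theorem proposition4p2:
  shows "(\<forall>T\<in>(Stilde :: (('n::finite) pol \<Rightarrow> 'n pol) set). \<forall>f\<in>Dsp. T f \<in> Dsp)
    \<and> inj_on res (Stilde :: (('n::finite) pol \<Rightarrow> 'n pol) set)
    \<and> res ` (Stilde :: (('n::finite) pol \<Rightarrow> 'n pol) set) = Send
    \<and> (\<forall>\<alpha> \<beta>. res (restrict (rhot \<alpha> \<beta>) Pspace) = (rho \<alpha> \<beta> :: 'n pol \<Rightarrow> 'n pol))"
  using Stilde_preserves_Dsp inj_on_res_Stilde res_Stilde_in_Send Send_in_res_Stilde res_rhot
  by (intro conjI ballI allI) blast+

end
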